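(* For all integers $n,p\ge1$, constants $R_x>0$, $R_\theta>0$, $c_0>0$, privacy parameters $0<\epsilon<2$, $0<\delta<1$, and any fixed no-reply distribution $\pi_\perp$ on $\mathbb{R}^p$, the output $\tilde\theta_\gamma$ of the ePTR linear regression algorithm is $(\epsilon,\delta)$-differentially private.
   Context: Datasets are $n$-tuples $\mathcal{X}=((x_1,y_1),\dots,(x_n,y_n))$ with $x_i\in\mathbb{R}^p$, $y_i\in\mathbb{R}$; $D_H(\mathcal{X},\mathcal{X}')$ is the number of indices where the pairs differ, and $\mathcal{X},\mathcal{X}'$ are neighbors if $D_H=1$. A randomized map $A$ is $(\epsilon,\delta)$-DP if $P(A(\mathcal{X})\in\mathcal{B})\le e^{\epsilon}P(A(\mathcal{X}')\in\mathcal{B})+\delta$ for all neighbors and all measurable $\mathcal{B}$. For $R>0$ and a vector (or scalar) $x$, $\Pi_R(x)=\frac{R\,x}{\max\{\|x\|,R\}}$. Efficient PTR (ePTR): fix $q$, a map $\hat\theta$ into $\mathbb{R}^q$, a level $\alpha>0$, a function $\gamma$ from datasets to $[0,\infty)$, $\epsilon>0$, $\delta\in(0,1)$, and a fixed probability distribution $\pi_\perp$ on $\mathbb{R}^q$. Let $M=1+\frac{2}{\epsilon}\log\max\{1/\delta,1/\epsilon\}$ and $p(\mathcal{X})=\frac{\exp(\frac12\epsilon(\gamma(\mathcal{X})-M))}{\exp(\frac12\epsilon(\gamma(\mathcal{X})-M))+1}$. On input $\mathcal{X}$, draw independently $I\sim\mathrm{Bernoulli}(p(\mathcal{X}))$,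 $\zeta\sim\mathcal{N}(0,I_q)$, $W\sim\pi_\perp$, and output $\hat\theta(\mathcal{X})+\frac{2\alpha}{\epsilon}\sqrt{2\log(1.25/\delta)}\,\zeta$ if $I=1$ and $W$ if $I=0$. ePTR linear regression algorithm: (1) replace $x_i$ by $\Pi_{R_x}(x_i)$ and $y_i$ by $\Pi_{R_xR_\theta}(y_i)$ (clipping to $[-R_xR_\theta,R_xR_\theta]$); (2) let $X\in\mathbb{R}^{p\times n}$ have columns $x_i$ and $Y=(y_1,\dots,y_n)^\top$, and set $\hat\theta=\Pi_{R_\theta}\big((XX^\top)^{-1}XY\big)$ if $XX^\top$ is invertible and $\hat\theta=0$ otherwise; (3) apply ePTR (with $q=p$) to $\hat\theta$ with $\gamma(\mathcal{X})=\frac{1}{2R_x^2}\max\{\lambda_{\min}(XX^\top)-c_0n-2R_x^2,\,0\}$ and $\alpha=\frac{8R_x^2R_\theta}{nc_0}$, and output the result $\tilde\theta_\gamma$. *)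

theory Defs
  imports "HOL-Probability.Probability"
begin

(* Pi_R(x) = R x / max(norm x, R); for reals norm = abs, so this is clipping to [-R,R] *)
definition clipR :: "real \<Rightarrow> 'a::real_normed_vector \<Rightarrow> 'a" where
  "clipR R x = (R / max (norm x) R) *\<^sub>R x"

type_synonym 'p dataset = "((real^'p::finite) \<times> real) list"

definition hamming :: "'a list \<Rightarrow> 'a list \<Rightarrow> nat" where
  "hamming D D' = card {i. i < length D \<and> D ! i \<noteq> D' ! i}"

definition neighbors :: "'a list \<Rightarrow> 'a list \<Rightarrow> bool" where
  "neighbors D D' \<longleftrightarrow> length D = length D' \<and> hamming D D' = 1"

definition is_DP :: "real \<Rightarrow> real \<Rightarrow> nat \<Rightarrow> ('a list \<Rightarrow> 'b measure) \<Rightarrow> bool" where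
  "is_DP \<epsilon> \<delta> n A \<longleftrightarrow>
     (\<forall>D D'. length D = n \<longrightarrow> neighbors D D' \<longrightarrow>
        (\<forall>B \<in> sets (A D). measure (A D) B \<le> exp \<epsilon> * measure (A D') B + \<delta>))"

definition std_gauss :: "(real^'q) measure" where
  "std_gauss = density lborel (\<lambda>z. ennreal (\<Prod>i\<in>UNIV. std_normal_density (z $ i)))"

definition ePTR_M :: "real \<Rightarrow> real \<Rightarrow> real" where
  "ePTR_M \<epsilon> \<delta> = 1 + (2 / \<epsilon>) * ln (max (1 / \<delta>) (1 / \<epsilon>))"

definition ePTR_prob :: "real \<Rightarrow> real \<Rightarrow> real \<Rightarrow> real" where
  "ePTR_prob \<epsilon> \<delta> g =
     exp (\<epsilon> / 2 * (g - ePTR_M \<epsilon> \<delta>)) / (exp (\<epsilon> / 2 * (g - ePTR_M \<epsilon> \<delta>)) + 1)"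

definition ePTR ::
  "('d \<Rightarrow> real^'q) \<Rightarrow> real \<Rightarrow> ('d \<Rightarrow> real) \<Rightarrow> real \<Rightarrow> real \<Rightarrow> (real^'q) measure
     \<Rightarrow> 'd \<Rightarrow> (real^'q) measure" where
  "ePTR \<theta> \<alpha> \<gamma> \<epsilon> \<delta> \<pi>perp D =
     bind (measure_pmf (bernoulli_pmf (ePTR_prob \<epsilon> \<delta> (\<gamma> D))))
       (\<lambda>I. if I then distr std_gauss borel
                   (\<lambda>z. \<theta> D + ((2 * \<alpha> / \<epsilon>) * sqrt (2 * ln (1.25 / \<delta>))) *\<^sub>R z)
            else \<pi>perp)"

definition clip_data :: "real \<Rightarrow> real \<Rightarrow> ('p::finite) dataset \<Rightarrow> 'p dataset" where
  "clip_data Rx R\<theta> D = map (\<lambda>(x, y). (clipR Rx x, clipR (Rx * R\<theta>) y)) D"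

definition outer :: "real^'p \<Rightarrow> real^'p \<Rightarrow> real^'p^'p" where
  "outer x y = (\<chi> i j. x $ i * y $ j)"

(* X X^T = sum_i x_i x_i^T *)
definition gram :: "'p dataset \<Rightarrow> real^'p^'p" where
  "gram D = sum_list (map (\<lambda>(x, y). outer x x) D)"

(* X Y = sum_i y_i x_i *)
definition xy :: "'p dataset \<Rightarrow> real^'p" where
  "xy D = sum_list (map (\<lambda>(x, y). y *\<^sub>R x) D)"

definition lambda_min :: "real^'p^'p \<Rightarrow> real" where
  "lambda_min A = Min {l. \<exists>v. v \<noteq> 0 \<and> A *v v = l *\<^sub>R v}"

definition theta_hat :: "real \<Rightarrow> real \<Rightarrow> ('p::finite) dataset \<Rightarrow> real^'p" where
  "theta_hat Rx R\<theta> D =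
     (let C = clip_data Rx R\<theta> D; G = gram C in
      if invertible G then clipR R\<theta> (matrix_inv G *v xy C) else 0)"

definition gamma_lr :: "real \<Rightarrow> real \<Rightarrow> real \<Rightarrow> ('p::finite) dataset \<Rightarrow> real" where
  "gamma_lr Rx R\<theta> c0 D =
     (let G = gram (clip_data Rx R\<theta> D) in
      (1 / (2 * Rx\<^sup>2)) * max (lambda_min G - c0 * real (length D) - 2 * Rx\<^sup>2) 0)"

definition ePTR_linreg ::
  "nat \<Rightarrow> real \<Rightarrow> real \<Rightarrow> real \<Rightarrow> real \<Rightarrow> real \<Rightarrow> (real^'p) measure
     \<Rightarrow> ('p::finite) dataset \<Rightarrow> (real^'p) measure" where
  "ePTR_linreg n Rx R\<theta> c0 \<epsilon> \<delta> \<pi>perp =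
     ePTR (theta_hat Rx R\<theta>) (8 * Rx\<^sup>2 * R\<theta> / (real n * c0)) (gamma_lr Rx R\<theta> c0) \<epsilon> \<delta> \<pi>perp"

end

theory Submission
  imports Defs
begin

text \<open>First, a generic privacy guarantee for ePTR: the coin is a logistic
  function of \<open>\<epsilon> \<gamma> / 2\<close>, so if \<open>\<gamma>\<close> moves by at most \<open>1/2\<close> its odds move by at most \<open>exp (\<epsilon> / 4)\<close>;
  when \<open>\<gamma> > 0\<close> the estimator has sensitivity \<open>\<alpha>\<close> and the Gaussian noise, calibrated by a Chernoff
  bound on the privacy loss, costs \<open>(3 \<epsilon> / 4, \<delta>)\<close>; when \<open>\<gamma> = 0\<close> the offset \<open>M\<close> makes the noisy
  branch occur with probability at most \<open>\<delta>\<close>.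

  Second, the two sensitivities for least squares. Replacing one clipped row changes
  \<open>X X\<^sup>T\<close> by a rank-one term of norm at most \<open>R\<^sub>x\<^sup>2\<close>, so \<open>\<lambda>\<^sub>m\<^sub>i\<^sub>n\<close> (by Rayleigh's principle) and hence
  \<open>\<gamma>\<close> move by at most \<open>R\<^sub>x\<^sup>2\<close> and \<open>1/2\<close>. If \<open>\<gamma> > 0\<close>, both Gram matrices have \<open>\<lambda>\<^sub>m\<^sub>i\<^sub>n \<ge> n c\<^sub>0\<close>; subtracting
  the normal equations gives \<open>n c\<^sub>0 \<parallel>u - u'\<parallel> \<le> 2 R\<^sub>x\<^sup>2 (R\<^sub>\<theta> + \<parallel>u'\<parallel>)\<close>, and projecting onto the
  \<open>R\<^sub>\<theta>\<close>-ball absorbs the factor \<open>\<parallel>u'\<parallel>\<close>, leaving \<open>8 R\<^sub>x\<^sup>2 R\<^sub>\<theta> / (n c\<^sub>0) = \<alpha>\<close>.\<close>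

section \<open>Smallest eigenvalue of a symmetric matrix\<close>

lemma symmetric_matrix_inner_commute:
  fixes A :: "real^'n^'n"
  assumes "transpose A = A"
  shows "(A *v v) \<bullet> w = v \<bullet> (A *v w)"
  by (metis assms dot_lmul_matrix vector_transpose_matrix)

lemma linear_coeff_zero_if_quadratic_nonneg:
  fixes b c :: real
  assumes "\<And>t. 0 \<le> 2 * t * b + t\<^sup>2 * c"
  shows "b = 0"
proof (rule ccontr)
  assume "b \<noteq> 0"
  define k where "k = \<bar>c\<bar> + 1"
  have "k > 0" by (simp add: k_def add_pos_nonneg)
  have "2 * (- b / k) * b + (- b / k)\<^sup>2 * c = b\<^sup>2 * (c - 2 * k) / k\<^sup>2"
    using \<open>k > 0\<close> by (simp add: power2_eq_square field_simps)
  also have "\<dots> < 0"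
    using \<open>b \<noteq> 0\<close> \<open>k > 0\<close> by (intro divide_neg_pos mult_pos_neg) (auto simp: k_def)
  finally show False using assms[of "- b / k"] by simp
qed

lemma symmetric_quadratic_form_expand:
  fixes A :: "real^'n^'n"
  assumes "transpose A = A"
  shows "(u + t *\<^sub>R w) \<bullet> (A *v (u + t *\<^sub>R w))
    = u \<bullet> (A *v u) + 2 * t * (w \<bullet> (A *v u)) + t\<^sup>2 * (w \<bullet> (A *v w))"
proof -
  have "u \<bullet> (A *v w) = w \<bullet> (A *v u)"
    using symmetric_matrix_inner_commute[OF assms, of u w] by (simp add: inner_commute)
  then show ?thesis
    by (simp add: algebra_simps power2_eq_square)
qed

lemma norm_add_scaleR_power2:
  fixes u w :: "'a::real_inner"
  shows "(norm (u + t *\<^sub>R w))\<^sup>2 = (norm u)\<^sup>2 + 2 * t * (w \<bullet> u) + t\<^sup>2 * (norm w)\<^sup>2"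
  unfolding power2_norm_eq_inner by (simp add: inner_commute algebra_simps power2_eq_square)

text \<open>Perturbing \<open>u\<close> in a direction \<open>w\<close> cannot decrease the quadratic form, so the first-order
  term \<open>w \<bullet> (A u - \<mu> u)\<close> vanishes.\<close>

lemma rayleigh_minimiser_eigenvector:
  fixes A :: "real^'n^'n"
  assumes sym: "transpose A = A"
    and ge: "\<And>v. \<mu> * (norm v)\<^sup>2 \<le> v \<bullet> (A *v v)"
    and eq: "u \<bullet> (A *v u) = \<mu> * (norm u)\<^sup>2"
  shows "A *v u = \<mu> *\<^sub>R u"
proof -
  define h where "h = A *v u - \<mu> *\<^sub>R u"
  have "w \<bullet> h = 0" for w
  proof (rule linear_coeff_zero_if_quadratic_nonneg)
    fix t
    have "\<mu> * (norm (u + t *\<^sub>R w))\<^sup>2 \<le> (u + t *\<^sub>R w) \<bullet> (A *v (u + t *\<^sub>R w))"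
      by (rule ge)
    then show "0 \<le> 2 * t * (w \<bullet> h) + t\<^sup>2 * (w \<bullet> (A *v w) - \<mu> * (norm w)\<^sup>2)"
      unfolding symmetric_quadratic_form_expand[OF sym] norm_add_scaleR_power2 eq h_def
      by (simp add: algebra_simps)
  qed
  from this[of h] show ?thesis by (simp add: h_def)
qed

lemma symmetric_matrix_min_eigenvalue_exists:
  fixes A :: "real^'n^'n"
  assumes sym: "transpose A = A"
  obtains \<mu> u where "u \<noteq> 0" "A *v u = \<mu> *\<^sub>R u" "\<And>v. \<mu> * (norm v)\<^sup>2 \<le> v \<bullet> (A *v v)"
proof -
  have cont: "continuous_on (sphere 0 1) (\<lambda>v::real^'n. v \<bullet> (A *v v))"
    unfolding matrix_vector_mult_def by (intro continuous_intros)
  have "sphere (0::real^'n) 1 \<noteq> {}"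
    using vector_choose_size[of 1, where 'a="real^'n"] by auto
  then obtain u where u: "norm u = 1"
    and umin: "\<And>w. norm w = 1 \<Longrightarrow> u \<bullet> (A *v u) \<le> w \<bullet> (A *v w)"
    using continuous_attains_inf[OF compact_sphere _ cont] by auto
  define \<mu> where "\<mu> = u \<bullet> (A *v u)"
  have ge: "\<mu> * (norm v)\<^sup>2 \<le> v \<bullet> (A *v v)" for v
  proof (cases "v = 0")
    case False
    have "\<mu> \<le> ((1 / norm v) *\<^sub>R v) \<bullet> (A *v ((1 / norm v) *\<^sub>R v))"
      unfolding \<mu>_def using False by (intro umin) simp
    also have "\<dots> = (v \<bullet> (A *v v)) / (norm v)\<^sup>2"
      by (simp add: matrix_vector_mult_scaleR power2_eq_square)
    finally show ?thesis using False by (simp add: field_simps)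
  qed simp
  have "A *v u = \<mu> *\<^sub>R u"
    using rayleigh_minimiser_eigenvector[OF sym ge] u by (simp add: \<mu>_def)
  with u ge show ?thesis by (intro that[of u]) auto
qed

lemma symmetric_matrix_eigenvalues_finite:
  fixes A :: "real^'n^'n"
  assumes sym: "transpose A = A"
  shows "finite {l. \<exists>v. v \<noteq> 0 \<and> A *v v = l *\<^sub>R v}" (is "finite ?S")
proof -
  define f where "f l = (SOME v. v \<noteq> 0 \<and> A *v v = l *\<^sub>R v)" for l
  have f: "f l \<noteq> 0 \<and> A *v f l = l *\<^sub>R f l" if "l \<in> ?S" for l
  proof -
    from that have "\<exists>v. v \<noteq> 0 \<and> A *v v = l *\<^sub>R v" by simp
    then show ?thesis unfolding f_def by (rule someI_ex)
  qed
  have orth: "f l \<bullet> f l' = 0" if "l \<in> ?S" "l' \<in> ?S" "l \<noteq> l'" for l l'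
  proof -
    have "l * (f l \<bullet> f l') = (A *v f l) \<bullet> f l'" using f[OF that(1)] by simp
    also have "\<dots> = f l \<bullet> (A *v f l')" by (rule symmetric_matrix_inner_commute[OF sym])
    also have "\<dots> = l' * (f l \<bullet> f l')" using f[OF that(2)] by simp
    finally show ?thesis using that(3) by simp
  qed
  have inj: "inj_on f ?S"
  proof (rule inj_onI, rule ccontr)
    fix l l' assume "l \<in> ?S" "l' \<in> ?S" "f l = f l'" "l \<noteq> l'"
    from orth[OF this(1,2,4)] \<open>f l = f l'\<close> have "f l \<bullet> f l = 0" by simp
    with f[OF \<open>l \<in> ?S\<close>] show False by simp
  qed
  have "pairwise orthogonal (f ` ?S)"
    unfolding pairwise_def orthogonal_def by (auto intro: orth)
  moreover have "0 \<notin> f ` ?S" using f by fastforce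
  ultimately have "independent (f ` ?S)" by (rule pairwise_orthogonal_independent)
  then have "finite (f ` ?S)" by (rule conjunct1[OF independent_bound])
  with inj show ?thesis by (simp add: finite_image_iff)
qed

lemma lambda_min_symmetric:
  fixes A :: "real^'n^'n"
  assumes sym: "transpose A = A"
  obtains u where "u \<noteq> 0" "A *v u = lambda_min A *\<^sub>R u"
    and "\<And>v. lambda_min A * (norm v)\<^sup>2 \<le> v \<bullet> (A *v v)"
proof -
  obtain \<mu> u where u: "u \<noteq> 0" "A *v u = \<mu> *\<^sub>R u"
    and ge: "\<And>v. \<mu> * (norm v)\<^sup>2 \<le> v \<bullet> (A *v v)"
    using symmetric_matrix_min_eigenvalue_exists[OF sym] by blast
  have "lambda_min A = \<mu>"
    unfolding lambda_min_def
  proof (rule Min_eqI[OF symmetric_matrix_eigenvalues_finite[OF sym]])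
    show "\<mu> \<in> {l. \<exists>v. v \<noteq> 0 \<and> A *v v = l *\<^sub>R v}" using u by blast
  next
    fix l assume "l \<in> {l. \<exists>v. v \<noteq> 0 \<and> A *v v = l *\<^sub>R v}"
    then obtain v where v: "v \<noteq> 0" "A *v v = l *\<^sub>R v" by blast
    then have "\<mu> * (norm v)\<^sup>2 \<le> l * (norm v)\<^sup>2" using ge[of v] by (simp add: power2_norm_eq_inner)
    then show "\<mu> \<le> l" using v(1) by simp
  qed
  with u ge show ?thesis by (intro that[of u]) auto
qed

lemma lambda_min_le_quadratic_form:
  fixes A :: "real^'n^'n"
  assumes "transpose A = A"
  shows "lambda_min A * (norm v)\<^sup>2 \<le> v \<bullet> (A *v v)"
  by (rule lambda_min_symmetric[OF assms]) blast

lemma lambda_min_greatest: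
  fixes A :: "real^'n^'n"
  assumes sym: "transpose A = A" and ge: "\<And>v. m * (norm v)\<^sup>2 \<le> v \<bullet> (A *v v)"
  shows "m \<le> lambda_min A"
proof -
  obtain u where u: "u \<noteq> 0" "A *v u = lambda_min A *\<^sub>R u"
    using lambda_min_symmetric[OF sym] by blast
  have "m * (norm u)\<^sup>2 \<le> lambda_min A * (norm u)\<^sup>2"
    using ge[of u] u(2) by (simp add: power2_norm_eq_inner)
  then show ?thesis using u(1) by simp
qed

lemma lambda_min_mult_norm_le:
  fixes A :: "real^'n^'n"
  assumes sym: "transpose A = A" and "lambda_min A \<ge> 0"
  shows "lambda_min A * norm v \<le> norm (A *v v)"
proof (cases "v = 0")
  case False
  have "lambda_min A * (norm v)\<^sup>2 \<le> v \<bullet> (A *v v)" by (rule lambda_min_le_quadratic_form[OF sym])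
  also have "\<dots> \<le> norm v * norm (A *v v)" by (rule norm_cauchy_schwarz)
  finally show ?thesis using False by (simp add: power2_eq_square)
qed simp

lemma invertible_if_lambda_min_pos:
  fixes A :: "real^'n^'n"
  assumes sym: "transpose A = A" and pos: "lambda_min A > 0"
  shows "invertible A"
proof -
  have "x = 0" if "A *v x = 0" for x
    using lambda_min_mult_norm_le[OF sym, of x] pos that by (simp add: mult_le_0_iff)
  then show ?thesis using invertible_left_inverse matrix_left_invertible_ker by blast
qed

lemma matrix_inv_mult_vec_right:
  fixes A :: "real^'n^'n"
  assumes "invertible A"
  shows "A *v (matrix_inv A *v b) = b"
proof -
  have "A ** matrix_inv A = mat 1 \<and> matrix_inv A ** A = mat 1"
    using assms unfolding invertible_def matrix_inv_def by (rule someI_ex)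
  then show ?thesis by (simp add: matrix_vector_mul_assoc)
qed

section \<open>Gram matrices, clipping and least squares\<close>

lemma outer_self_mult_vec: "outer x x *v v = (x \<bullet> v) *\<^sub>R x"
  by (simp add: vec_eq_iff outer_def matrix_vector_mult_def inner_vec_def sum_distrib_left
      algebra_simps)

lemma gram_Cons: "gram (a # C) = outer (fst a) (fst a) + gram C"
  by (cases a) (simp add: gram_def)

lemma transpose_gram: "transpose (gram C) = gram C"
proof (induction C)
  case Nil
  then show ?case by (simp add: gram_def vec_eq_iff transpose_def)
next
  case (Cons a C)
  have "transpose (outer x x) = outer x x" for x :: "real^'n"
    by (simp add: vec_eq_iff outer_def transpose_def mult.commute)
  with Cons show ?case
    by (simp add: gram_Cons vec_eq_iff transpose_def)
qed

lemma sum_list_list_update: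
  fixes xs :: "'a::ab_group_add list"
  assumes "k < length xs"
  shows "sum_list (xs[k := a]) = sum_list xs + a - xs ! k"
  using assms
proof (induction xs arbitrary: k)
  case (Cons x xs)
  then show ?case by (cases k) (auto simp: algebra_simps)
qed simp

lemma gram_list_update_mult_vec:
  assumes "k < length C"
  shows "gram (C[k := a]) *v v
    = gram C *v v + (fst a \<bullet> v) *\<^sub>R fst a - (fst (C ! k) \<bullet> v) *\<^sub>R fst (C ! k)"
  using assms unfolding gram_def
  by (simp add: map_update sum_list_list_update split_beta matrix_vector_mult_add_rdistrib
      matrix_vector_mult_diff_rdistrib outer_self_mult_vec)

lemma xy_list_update:
  assumes "k < length C"
  shows "xy (C[k := a]) = xy C + snd a *\<^sub>R fst a - snd (C ! k) *\<^sub>R fst (C ! k)"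
  using assms unfolding xy_def by (simp add: map_update sum_list_list_update split_beta)

lemma lambda_min_gram_list_update:
  assumes k: "k < length C" and bound: "norm (fst (C ! k)) \<le> R"
  shows "lambda_min (gram C) - R\<^sup>2 \<le> lambda_min (gram (C[k := a]))"
proof (rule lambda_min_greatest[OF transpose_gram])
  fix v
  have "\<bar>fst (C ! k) \<bullet> v\<bar> \<le> R * norm v"
    using Cauchy_Schwarz_ineq2[of "fst (C ! k)" v] bound
    by (meson mult_right_mono norm_ge_zero order_trans)
  then have "(fst (C ! k) \<bullet> v)\<^sup>2 \<le> R\<^sup>2 * (norm v)\<^sup>2"
    by (metis abs_ge_zero power2_abs power_mono power_mult_distrib)
  moreover have "v \<bullet> (gram (C[k := a]) *v v)
      = v \<bullet> (gram C *v v) + (fst a \<bullet> v)\<^sup>2 - (fst (C ! k) \<bullet> v)\<^sup>2"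
    using k by (simp add: gram_list_update_mult_vec inner_add_right inner_diff_right inner_commute power2_eq_square)
  moreover have "lambda_min (gram C) * (norm v)\<^sup>2 \<le> v \<bullet> (gram C *v v)"
    by (rule lambda_min_le_quadratic_form[OF transpose_gram])
  ultimately show "(lambda_min (gram C) - R\<^sup>2) * (norm v)\<^sup>2 \<le> v \<bullet> (gram (C[k := a]) *v v)"
    using zero_le_power2[of "fst a \<bullet> v"] unfolding left_diff_distrib by linarith
qed

lemma norm_clipR_le:
  assumes "R > 0"
  shows "norm (clipR R x) \<le> R"
  using assms by (simp add: clipR_def field_simps max_def)

lemma clipR_dist_le:
  fixes a b :: "'a::real_normed_vector"
  assumes R: "R > 0"
  shows "norm (clipR R a - clipR R b) \<le> 2 * R * norm (a - b) / max (norm b) R"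
proof -
  define M where "M = max (norm b) R"
  define Ma where "Ma = max (norm a) R"
  have M: "M > 0" "Ma > 0" "norm a \<le> Ma" using R by (auto simp: M_def Ma_def)
  have MMa: "\<bar>M - Ma\<bar> \<le> norm (a - b)"
    unfolding M_def Ma_def using norm_triangle_ineq3[of a b] norm_triangle_ineq3[of b a]
    by (simp add: norm_minus_commute max_def abs_le_iff)
  have "clipR R a - clipR R b = (R / M) *\<^sub>R (a - b) + (R * (1 / Ma - 1 / M)) *\<^sub>R a"
    unfolding clipR_def M_def[symmetric] Ma_def[symmetric] by (simp add: algebra_simps divide_inverse)
  also have "norm \<dots> \<le> R / M * norm (a - b) + R * (\<bar>1 / Ma - 1 / M\<bar> * norm a)"
    using norm_triangle_ineq[of "(R / M) *\<^sub>R (a - b)" "(R * (1 / Ma - 1 / M)) *\<^sub>R a"] R M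
    by (simp add: abs_mult)
  also have "\<bar>1 / Ma - 1 / M\<bar> * norm a \<le> \<bar>M - Ma\<bar> / M"
  proof -
    have "\<bar>1 / Ma - 1 / M\<bar> * norm a \<le> \<bar>1 / Ma - 1 / M\<bar> * Ma" using M by (intro mult_left_mono) auto
    also have "\<dots> = \<bar>M - Ma\<bar> / M" using M by (simp add: field_simps)
    finally show ?thesis .
  qed
  also have "\<bar>M - Ma\<bar> / M \<le> norm (a - b) / M"
    using M MMa by (simp add: divide_right_mono)
  finally show ?thesis using R M by (simp add: M_def field_simps)
qed

lemma norm_residual_scaleR_le:
  fixes x w :: "'a::real_inner"
  assumes "norm x \<le> Rx" "\<bar>y\<bar> \<le> Ry"
  shows "norm ((y - x \<bullet> w) *\<^sub>R x) \<le> (Ry + Rx * norm w) * Rx"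
proof -
  have "\<bar>x \<bullet> w\<bar> \<le> Rx * norm w"
    using Cauchy_Schwarz_ineq2[of x w] assms(1) by (meson mult_right_mono norm_ge_zero order_trans)
  then have "\<bar>y - x \<bullet> w\<bar> \<le> Ry + Rx * norm w" using assms(2) by linarith
  then show ?thesis using assms(1) by (simp add: mult_mono')
qed

lemma least_squares_list_update_bound:
  assumes k: "k < length C"
    and bounds: "norm (fst (C ! k)) \<le> Rx" "\<bar>snd (C ! k)\<bar> \<le> Ry" "norm (fst a) \<le> Rx" "\<bar>snd a\<bar> \<le> Ry"
    and L: "0 \<le> L" "L \<le> lambda_min (gram C)"
    and u: "gram C *v u = xy C" and u': "gram (C[k := a]) *v u' = xy (C[k := a])"
  shows "L * norm (u - u') \<le> 2 * Rx * (Ry + Rx * norm u')"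
proof -
  define x where "x = fst (C ! k)"
  define y where "y = snd (C ! k)"
  define x' where "x' = fst a"
  define y' where "y' = snd a"
  have "gram C *v (u - u') = (y - x \<bullet> u') *\<^sub>R x - (y' - x' \<bullet> u') *\<^sub>R x'"
    using u u' gram_list_update_mult_vec[OF k, of a u'] xy_list_update[OF k, of a]
    by (simp add: x_def y_def x'_def y'_def algebra_simps)
  then have "norm (gram C *v (u - u'))
      \<le> norm ((y - x \<bullet> u') *\<^sub>R x) + norm ((y' - x' \<bullet> u') *\<^sub>R x')"
    by (simp only: norm_triangle_ineq4)
  also have "\<dots> \<le> (Ry + Rx * norm u') * Rx + (Ry + Rx * norm u') * Rx"
    using bounds by (intro add_mono norm_residual_scaleR_le) (simp_all add: x_def y_def x'_def y'_def)
  finally have "norm (gram C *v (u - u')) \<le> 2 * Rx * (Ry + Rx * norm u')" by simp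
  moreover have "L * norm (u - u') \<le> lambda_min (gram C) * norm (u - u')"
    using L by (simp add: mult_right_mono)
  moreover have "\<dots> \<le> norm (gram C *v (u - u'))"
    using L by (intro lambda_min_mult_norm_le transpose_gram) simp
  ultimately show ?thesis by linarith
qed

lemma clipped_least_squares_sensitivity:
  assumes Rx: "Rx > 0" and R\<theta>: "R\<theta> > 0" and k: "k < length C"
    and bounds: "norm (fst (C ! k)) \<le> Rx" "\<bar>snd (C ! k)\<bar> \<le> Rx * R\<theta>"
      "norm (fst a) \<le> Rx" "\<bar>snd a\<bar> \<le> Rx * R\<theta>"
    and L: "L > 0" "L \<le> lambda_min (gram C)" and pos: "lambda_min (gram (C[k := a])) > 0"
  shows "norm (clipR R\<theta> (matrix_inv (gram C) *v xy C)
      - clipR R\<theta> (matrix_inv (gram (C[k := a])) *v xy (C[k := a]))) \<le> 8 * Rx\<^sup>2 * R\<theta> / L"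
proof -
  define u u' where "u = matrix_inv (gram C) *v xy C"
    and "u' = matrix_inv (gram (C[k := a])) *v xy (C[k := a])"
  have "invertible (gram C)" "invertible (gram (C[k := a]))"
    using L pos by (auto intro: invertible_if_lambda_min_pos transpose_gram)
  then have "gram C *v u = xy C" "gram (C[k := a]) *v u' = xy (C[k := a])"
    by (simp_all add: u_def u'_def matrix_inv_mult_vec_right)
  then have "L * norm (u - u') \<le> 2 * Rx * (Rx * R\<theta> + Rx * norm u')"
    using L by (intro least_squares_list_update_bound[OF k bounds]) auto
  also have "\<dots> = 2 * Rx\<^sup>2 * (R\<theta> + norm u')" by (simp add: algebra_simps power2_eq_square)
  also have "\<dots> \<le> 2 * Rx\<^sup>2 * (2 * max (norm u') R\<theta>)" by (intro mult_left_mono) auto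
  finally have "norm (u - u') \<le> 4 * Rx\<^sup>2 * max (norm u') R\<theta> / L"
    using L by (simp add: pos_le_divide_eq mult.commute)
  then have "2 * R\<theta> * norm (u - u') / max (norm u') R\<theta> \<le> 8 * Rx\<^sup>2 * R\<theta> / L"
    using R\<theta> L by (simp add: field_simps)
  with clipR_dist_le[OF R\<theta>, of u u'] show ?thesis by (simp only: u_def u'_def)
qed

section \<open>The Gaussian mechanism\<close>

definition std_gauss_density :: "real^'q \<Rightarrow> real" where
  "std_gauss_density z = (\<Prod>i\<in>UNIV. std_normal_density (z $ i))"

lemma std_gauss_eq_density: "std_gauss = density lborel (\<lambda>z. ennreal (std_gauss_density z))"
  by (simp add: std_gauss_def std_gauss_density_def)

lemma sets_std_gauss [simp, measurable_cong]: "sets std_gauss = sets borel"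
  by (simp add: std_gauss_eq_density)

lemma std_gauss_density_nonneg: "0 \<le> std_gauss_density z"
  by (simp add: std_gauss_density_def prod_nonneg)

lemma borel_measurable_std_gauss_density [measurable]: "std_gauss_density \<in> borel_measurable borel"
proof (rule borel_measurable_continuous_onI)
  show "continuous_on UNIV (std_gauss_density :: real^'q \<Rightarrow> real)"
    unfolding std_gauss_density_def[abs_def] std_normal_density_def by (intro continuous_intros) auto
qed

lemma std_normal_density_diff:
  "std_normal_density (a - b) = std_normal_density a * exp (a * b - b\<^sup>2 / 2)"
proof -
  have "exp (- ((a - b)\<^sup>2) / 2) = exp (- (a\<^sup>2) / 2) * exp (a * b - b\<^sup>2 / 2)"
    by (simp add: exp_add[symmetric] power2_eq_square field_simps)
  then show ?thesis by (simp add: std_normal_density_def)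
qed

lemma std_gauss_density_diff:
  "std_gauss_density (z - v) = std_gauss_density z * exp (z \<bullet> v - (norm v)\<^sup>2 / 2)"
proof -
  have "(norm v)\<^sup>2 = (\<Sum>i\<in>UNIV. (v $ i)\<^sup>2)"
    unfolding power2_norm_eq_inner inner_vec_def by (simp add: power2_eq_square)
  then have "z \<bullet> v - (norm v)\<^sup>2 / 2 = (\<Sum>i\<in>UNIV. z $ i * v $ i - (v $ i)\<^sup>2 / 2)"
    by (simp add: inner_vec_def sum_subtractf sum_divide_distrib)
  then show ?thesis
    by (simp add: std_gauss_density_def std_normal_density_diff prod.distrib exp_sum)
qed

lemma nn_integral_std_gauss_density: "(\<integral>\<^sup>+z. ennreal (std_gauss_density (z::real^'q)) \<partial>lborel) = 1"
proof -
  have "ennreal (std_gauss_density z) = (\<Prod>b\<in>Basis. ennreal (std_normal_density (z \<bullet> b)))"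
    for z :: "real^'q"
    by (simp add: std_gauss_density_def prod_ennreal cart_eq_inner_axis Basis_vec_def
        UNION_singleton_eq_range prod.reindex axis_eq_axis inj_on_def)
  then have "(\<integral>\<^sup>+z. ennreal (std_gauss_density (z::real^'q)) \<partial>lborel)
      = (\<integral>\<^sup>+z. (\<Prod>b\<in>Basis. ennreal (std_normal_density ((z::real^'q) \<bullet> b))) \<partial>lborel)"
    by simp
  also have "\<dots> = (\<Prod>b\<in>(Basis::(real^'q) set). \<integral>\<^sup>+x. ennreal (std_normal_density x) \<partial>lborel)"
    by (rule nn_integral_lborel_prod) auto
  also have "(\<integral>\<^sup>+x. ennreal (std_normal_density x) \<partial>lborel) = 1"
    by (subst nn_integral_eq_integral) auto
  finally show ?thesis by simp
qed

lemma space_std_gauss [simp]: "space std_gauss = UNIV"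
  by (simp add: std_gauss_eq_density)

lemma prob_space_std_gauss: "prob_space (std_gauss :: (real^'q) measure)"
proof
  have "emeasure (std_gauss :: (real^'q) measure) (space std_gauss)
      = (\<integral>\<^sup>+z. ennreal (std_gauss_density (z::real^'q)) * indicator UNIV z \<partial>lborel)"
    unfolding std_gauss_eq_density by (subst emeasure_density) auto
  then show "emeasure (std_gauss :: (real^'q) measure) (space std_gauss) = 1"
    using nn_integral_std_gauss_density by simp
qed

lemma measurable_std_gauss_iff: "measurable std_gauss M = measurable borel M"
  by (rule measurable_cong_sets[OF sets_std_gauss refl])

lemma prob_space_distr_std_gauss:
  "f \<in> borel_measurable borel \<Longrightarrow> prob_space (distr std_gauss borel f)"
  by (rule prob_space.prob_space_distr[OF prob_space_std_gauss]) (simp only: measurable_std_gauss_iff)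

lemma emeasure_std_gauss:
  assumes "A \<in> sets borel"
  shows "emeasure std_gauss A = (\<integral>\<^sup>+z. ennreal (std_gauss_density z) * indicator A z \<partial>lborel)"
  unfolding std_gauss_eq_density using assms by (subst emeasure_density) auto

lemma emeasure_distr_std_gauss:
  assumes [measurable]: "f \<in> borel_measurable borel" "B \<in> sets borel"
  shows "emeasure (distr std_gauss borel f) B
    = (\<integral>\<^sup>+z. ennreal (std_gauss_density z) * indicator B (f z) \<partial>lborel)"
proof -
  have "f -` B \<in> sets borel"
    using measurable_sets_borel[OF assms] by simp
  moreover have "emeasure (distr std_gauss borel f) B = emeasure std_gauss (f -` B)"
    by (subst emeasure_distr) (simp_all add: measurable_std_gauss_iff)
  ultimately show ?thesis by (simp add: emeasure_std_gauss indicator_def)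
qed

lemma nn_integral_lborel_add:
  fixes c :: "'a::euclidean_space"
  assumes [measurable]: "F \<in> borel_measurable borel"
  shows "(\<integral>\<^sup>+z. F (z + c) \<partial>lborel) = (\<integral>\<^sup>+z. F z \<partial>lborel)"
proof -
  have "(\<integral>\<^sup>+z. F z \<partial>lborel) = (\<integral>\<^sup>+z. F z \<partial>distr lborel borel ((+) c))"
    by (simp add: lborel_distr_plus)
  also have "\<dots> = (\<integral>\<^sup>+z. F (c + z) \<partial>lborel)"
    by (subst nn_integral_distr) auto
  finally show ?thesis by (simp add: add.commute)
qed

lemma nn_integral_shifted_std_gauss_density:
  fixes u :: "real^'q"
  assumes [measurable]: "A \<in> sets borel"
  shows "(\<integral>\<^sup>+w. ennreal (std_gauss_density (w - u)) * indicator A w \<partial>lborel)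
    = emeasure std_gauss {z. z + u \<in> A}"
proof -
  have "{z. z + u \<in> A} = (\<lambda>z. z + u) -` A" by auto
  also have "\<dots> \<in> sets borel"
    using measurable_sets_borel[of "\<lambda>z. z + u" borel A] by simp
  finally have [measurable]: "{z. z + u \<in> A} \<in> sets borel" .
  have "(\<integral>\<^sup>+w. ennreal (std_gauss_density (w - u)) * indicator A w \<partial>lborel)
      = (\<integral>\<^sup>+z. ennreal (std_gauss_density (z + u - u)) * indicator A (z + u) \<partial>lborel)"
    by (rule nn_integral_lborel_add[symmetric]) measurable
  also have "\<dots> = (\<integral>\<^sup>+z. ennreal (std_gauss_density z) * indicator {z. z + u \<in> A} z \<partial>lborel)"
    by (simp add: indicator_def)
  also have "\<dots> = emeasure std_gauss {z. z + u \<in> A}"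
    by (rule emeasure_std_gauss[symmetric]) measurable
  finally show ?thesis .
qed

text \<open>Chernoff bound: compare the density on the half-space with the density shifted by \<open>s u\<close>,
  \<open>s = t / \<parallel>u\<parallel>\<^sup>2\<close>, whose likelihood ratio is at least \<open>exp (t\<^sup>2 / (2 \<parallel>u\<parallel>\<^sup>2))\<close> there.\<close>

lemma emeasure_std_gauss_halfspace_le:
  fixes u :: "real^'q"
  assumes t: "0 \<le> t" and u: "u \<noteq> 0"
  shows "emeasure std_gauss {z. t < z \<bullet> u} \<le> ennreal (exp (- t\<^sup>2 / (2 * (norm u)\<^sup>2)))"
proof -
  define K where "K = exp (- t\<^sup>2 / (2 * (norm u)\<^sup>2))"
  define s where "s = t / (norm u)\<^sup>2"
  have nu: "(norm u)\<^sup>2 > 0" using u by simp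
  have s: "s \<ge> 0" using t nu by (simp add: s_def)
  have ratio: "std_gauss_density (z - s *\<^sub>R u) * K = std_gauss_density z * exp (s * (z \<bullet> u - t))" for z
  proof -
    have "s * (z \<bullet> u) - (norm (s *\<^sub>R u))\<^sup>2 / 2 - t\<^sup>2 / (2 * (norm u)\<^sup>2) = s * (z \<bullet> u - t)"
      using nu by (simp add: s_def power2_eq_square field_simps)
    then show ?thesis
      by (simp add: std_gauss_density_diff K_def mult.assoc exp_add[symmetric])
  qed
  have pointwise: "ennreal (std_gauss_density z) * indicator {z. t < z \<bullet> u} z
      \<le> ennreal (std_gauss_density (z + - (s *\<^sub>R u))) * ennreal K" for z
  proof (cases "t < z \<bullet> u")
    case True
    then have "std_gauss_density z \<le> std_gauss_density z * exp (s * (z \<bullet> u - t))"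
      using s std_gauss_density_nonneg[of z] by (simp add: mult_le_cancel_left1)
    then have "ennreal (std_gauss_density z) \<le> ennreal (std_gauss_density (z - s *\<^sub>R u) * K)"
      unfolding ratio by (rule ennreal_leI)
    with True show ?thesis by (simp add: ennreal_mult' std_gauss_density_nonneg)
  qed simp
  have "{z. t < z \<bullet> u} \<in> sets borel"
    by (intro borel_open open_Collect_less continuous_intros)
  then have "emeasure std_gauss {z. t < z \<bullet> u}
      = (\<integral>\<^sup>+z. ennreal (std_gauss_density z) * indicator {z. t < z \<bullet> u} z \<partial>lborel)"
    by (rule emeasure_std_gauss)
  also have "\<dots> \<le> (\<integral>\<^sup>+z. ennreal (std_gauss_density (z + - (s *\<^sub>R u))) * ennreal K \<partial>lborel)"
    by (intro nn_integral_mono pointwise)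
  also have "\<dots> = (\<integral>\<^sup>+z. ennreal (std_gauss_density (z + - (s *\<^sub>R u))) \<partial>lborel) * ennreal K"
    by (rule nn_integral_multc) measurable
  also have "\<dots> = ennreal K"
    using nn_integral_lborel_add[of "\<lambda>z. ennreal (std_gauss_density z)" "- (s *\<^sub>R u)"]
    by (simp add: nn_integral_std_gauss_density)
  finally show ?thesis by (simp add: K_def)
qed

text \<open>Where the privacy loss \<open>w \<bullet> u - \<parallel>u\<parallel>\<^sup>2 / 2\<close> is at most \<open>\<eta>\<close> the densities differ by a factor
  \<open>exp \<eta>\<close>; elsewhere the shifted density is kept as it is.\<close>

lemma std_gauss_density_diff_split:
  fixes w u :: "real^'q"
  shows "ennreal (std_gauss_density (w - u)) * indicator B x
    \<le> ennreal (exp \<eta>) * (ennreal (std_gauss_density w) * indicator B x)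
      + ennreal (std_gauss_density (w - u)) * indicator {w. \<eta> < w \<bullet> u - (norm u)\<^sup>2 / 2} w"
proof (cases "\<eta> < w \<bullet> u - (norm u)\<^sup>2 / 2")
  case True
  then show ?thesis by (simp add: add_increasing indicator_def)
next
  case False
  then have "std_gauss_density (w - u) \<le> exp \<eta> * std_gauss_density w"
    using std_gauss_density_nonneg[of w]
    by (simp add: std_gauss_density_diff mult.commute mult_left_mono)
  then have "ennreal (std_gauss_density (w - u)) \<le> ennreal (exp \<eta> * std_gauss_density w)"
    by (rule ennreal_leI)
  with False show ?thesis
    by (simp add: ennreal_mult std_gauss_density_nonneg indicator_def mult.assoc)
qed

lemma emeasure_shifted_gaussian_le:
  fixes m u :: "real^'q"
  assumes [measurable]: "B \<in> sets borel"
  shows "emeasure (distr std_gauss borel (\<lambda>z. m + \<sigma> *\<^sub>R (z + u))) B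
    \<le> ennreal (exp \<eta>) * emeasure (distr std_gauss borel (\<lambda>z. m + \<sigma> *\<^sub>R z)) B
      + emeasure std_gauss {z. \<eta> - (norm u)\<^sup>2 / 2 < z \<bullet> u}"
proof -
  define E where "E = {w. \<eta> < w \<bullet> u - (norm u)\<^sup>2 / 2}"
  have [measurable]: "E \<in> sets borel"
    unfolding E_def by (intro borel_open open_Collect_less continuous_intros)
  have [measurable]: "(\<lambda>z. m + \<sigma> *\<^sub>R (z + c)) \<in> borel_measurable borel" for c
    by (intro borel_measurable_continuous_onI continuous_intros)
  have "emeasure (distr std_gauss borel (\<lambda>z. m + \<sigma> *\<^sub>R (z + u))) B
      = (\<integral>\<^sup>+z. ennreal (std_gauss_density z) * indicator B (m + \<sigma> *\<^sub>R (z + u)) \<partial>lborel)"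
    by (rule emeasure_distr_std_gauss) measurable
  also have "\<dots> = (\<integral>\<^sup>+w. ennreal (std_gauss_density (w - u)) * indicator B (m + \<sigma> *\<^sub>R w) \<partial>lborel)"
    using nn_integral_lborel_add[of "\<lambda>z. ennreal (std_gauss_density z) * indicator B (m + \<sigma> *\<^sub>R (z + u))" "- u"]
    by simp
  also have "\<dots> \<le> (\<integral>\<^sup>+w. ennreal (exp \<eta>) * (ennreal (std_gauss_density w) * indicator B (m + \<sigma> *\<^sub>R w))
      + ennreal (std_gauss_density (w - u)) * indicator E w \<partial>lborel)"
    unfolding E_def by (intro nn_integral_mono std_gauss_density_diff_split)
  also have "\<dots> = ennreal (exp \<eta>) * (\<integral>\<^sup>+w. ennreal (std_gauss_density w) * indicator B (m + \<sigma> *\<^sub>R w) \<partial>lborel)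
      + (\<integral>\<^sup>+w. ennreal (std_gauss_density (w - u)) * indicator E w \<partial>lborel)"
    by (simp add: nn_integral_add nn_integral_cmult)
  also have "(\<integral>\<^sup>+w. ennreal (std_gauss_density w) * indicator B (m + \<sigma> *\<^sub>R w) \<partial>lborel)
      = emeasure (distr std_gauss borel (\<lambda>z. m + \<sigma> *\<^sub>R z)) B"
    by (rule emeasure_distr_std_gauss[symmetric]) measurable
  also have "(\<integral>\<^sup>+w. ennreal (std_gauss_density (w - u)) * indicator E w \<partial>lborel)
      = emeasure std_gauss {z. z + u \<in> E}"
    by (rule nn_integral_shifted_std_gauss_density) measurable
  also have "{z. z + u \<in> E} = {z. \<eta> - (norm u)\<^sup>2 / 2 < z \<bullet> u}"
    by (auto simp: E_def inner_add_left power2_norm_eq_inner)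
  finally show ?thesis .
qed

lemma ln_five_fourths_ge: "1 / 5 \<le> ln (1.25 :: real)"
proof -
  have "ln (0.8 :: real) \<le> 0.8 - 1" by (rule ln_le_minus_one) simp
  moreover have "ln (0.8 :: real) = - ln 1.25"
    by (simp add: ln_inverse[symmetric])
  ultimately show ?thesis by simp
qed

lemma calibration_square_bound:
  fixes c :: real
  assumes "c > 0"
  shows "c\<^sup>2 - 2 / 5 \<le> (3 * c / 2 - 1 / (2 * c))\<^sup>2"
proof -
  have "(3 * c / 2 - 1 / (2 * c))\<^sup>2 - (c\<^sup>2 - 2 / 5) = (5 * (c\<^sup>2 - 11 / 25)\<^sup>2 + 4 / 125) / (4 * c\<^sup>2)"
    using assms by (simp add: field_simps power2_eq_square)
  also have "\<dots> \<ge> 0" by simp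
  finally show ?thesis by simp
qed

text \<open>With \<open>c = sqrt (2 ln (1.25 / \<delta>))\<close> and \<open>a \<le> \<epsilon> / (2 c)\<close>, write \<open>3 \<epsilon> / 4 - a\<^sup>2 / 2 = a r\<close>; then
  \<open>r \<ge> 3 c / 2 - 1 / (2 c)\<close> (using \<open>\<epsilon> < 2\<close>), whose square exceeds \<open>c\<^sup>2 - 2 ln 1.25 = - 2 ln \<delta>\<close>.\<close>

lemma gaussian_noise_calibration:
  fixes \<epsilon> \<delta> a :: real
  assumes \<epsilon>: "0 < \<epsilon>" "\<epsilon> < 2" and \<delta>: "0 < \<delta>" "\<delta> < 1"
    and a: "0 < a" "a \<le> \<epsilon> / (2 * sqrt (2 * ln (1.25 / \<delta>)))"
  shows "a\<^sup>2 / 2 \<le> 3 * \<epsilon> / 4" and "exp (- (3 * \<epsilon> / 4 - a\<^sup>2 / 2)\<^sup>2 / (2 * a\<^sup>2)) \<le> \<delta>"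
proof -
  define c where "c = sqrt (2 * ln (1.25 / \<delta>))"
  have ln: "ln (1.25 / \<delta>) = ln 1.25 - ln \<delta>" "ln \<delta> < 0"
    using \<delta> by (intro ln_divide_pos, simp_all)
  then have nonneg: "0 \<le> 2 * ln (1.25 / \<delta>)" using ln_five_fourths_ge by linarith
  then have "c\<^sup>2 = 2 * ln (1.25 / \<delta>)" unfolding c_def by (rule real_sqrt_pow2)
  then have c2: "c\<^sup>2 = 2 * ln 1.25 - 2 * ln \<delta>" and c2_gt: "c\<^sup>2 > 2 / 5"
    using ln ln_five_fourths_ge by linarith+
  have "c \<ge> 0" unfolding c_def using nonneg by (rule real_sqrt_ge_zero)
  with c2_gt have c_pos: "c > 0" by (cases "c = 0") auto
  have "3 * c / 2 - 1 / (2 * c) = (3 * c\<^sup>2 - 1) / (2 * c)"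
    using c_pos by (simp add: field_simps power2_eq_square)
  with c2_gt c_pos have c: "c > 0" "3 * c / 2 - 1 / (2 * c) \<ge> 0" by simp_all
  define r where "r = (3 * \<epsilon> / 4) / a - a / 2"
  have "a \<le> \<epsilon> / (2 * c)" using a by (simp add: c_def)
  then have "3 * c / 2 \<le> (3 * \<epsilon> / 4) / a" "a / 2 \<le> 1 / (2 * c)"
    using \<epsilon> a(1) c(1) by (simp_all add: field_simps)
  then have r: "3 * c / 2 - 1 / (2 * c) \<le> r" by (simp add: r_def)
  have eq: "3 * \<epsilon> / 4 - a\<^sup>2 / 2 = a * r"
    using a(1) by (simp add: r_def field_simps power2_eq_square)
  have "0 \<le> a * r" using a(1) c(2) r by simp
  then show "a\<^sup>2 / 2 \<le> 3 * \<epsilon> / 4" using eq by linarith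
  have "- 2 * ln \<delta> \<le> r\<^sup>2"
    using calibration_square_bound[OF c(1)] power_mono[OF r c(2), of 2] c2 ln_five_fourths_ge by linarith
  then have "- (3 * \<epsilon> / 4 - a\<^sup>2 / 2)\<^sup>2 / (2 * a\<^sup>2) \<le> ln \<delta>"
    unfolding eq using a(1) by (simp add: power_mult_distrib)
  then show "exp (- (3 * \<epsilon> / 4 - a\<^sup>2 / 2)\<^sup>2 / (2 * a\<^sup>2)) \<le> \<delta>"
    using \<delta>(1) by (metis exp_le_cancel_iff exp_ln)
qed

lemma emeasure_std_gauss_calibrated_tail_le:
  fixes u :: "real^'q"
  assumes \<epsilon>: "0 < \<epsilon>" "\<epsilon> < 2" and \<delta>: "0 < \<delta>" "\<delta> < 1"
    and u: "norm u \<le> \<epsilon> / (2 * sqrt (2 * ln (1.25 / \<delta>)))"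
  shows "emeasure std_gauss {z. 3 * \<epsilon> / 4 - (norm u)\<^sup>2 / 2 < z \<bullet> u} \<le> ennreal \<delta>"
proof (cases "u = 0")
  case True
  then show ?thesis using \<epsilon> by simp
next
  case False
  then have calib: "(norm u)\<^sup>2 / 2 \<le> 3 * \<epsilon> / 4"
    "exp (- (3 * \<epsilon> / 4 - (norm u)\<^sup>2 / 2)\<^sup>2 / (2 * (norm u)\<^sup>2)) \<le> \<delta>"
    using gaussian_noise_calibration[OF \<epsilon> \<delta> _ u] by simp_all
  then have "emeasure std_gauss {z. 3 * \<epsilon> / 4 - (norm u)\<^sup>2 / 2 < z \<bullet> u}
      \<le> ennreal (exp (- (3 * \<epsilon> / 4 - (norm u)\<^sup>2 / 2)\<^sup>2 / (2 * (norm u)\<^sup>2)))"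
    using False by (intro emeasure_std_gauss_halfspace_le) simp_all
  then show ?thesis using ennreal_leI[OF calib(2)] by (rule order_trans)
qed

lemma measure_gaussian_mechanism_le:
  fixes m m' :: "real^'q"
  assumes \<epsilon>: "0 < \<epsilon>" "\<epsilon> < 2" and \<delta>: "0 < \<delta>" "\<delta> < 1" and \<alpha>: "\<alpha> > 0"
    and dist: "norm (m - m') \<le> \<alpha>" and B: "B \<in> sets borel"
  defines "\<sigma> \<equiv> (2 * \<alpha> / \<epsilon>) * sqrt (2 * ln (1.25 / \<delta>))"
  shows "measure (distr std_gauss borel (\<lambda>z. m + \<sigma> *\<^sub>R z)) B
    \<le> exp (3 * \<epsilon> / 4) * measure (distr std_gauss borel (\<lambda>z. m' + \<sigma> *\<^sub>R z)) B + \<delta>"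
proof -
  have "ln (1.25 / \<delta>) > 0" using \<delta> by simp
  then have \<sigma>: "\<sigma> > 0" using \<epsilon> \<alpha> by (simp add: \<sigma>_def)
  define u where "u = (1 / \<sigma>) *\<^sub>R (m - m')"
  have shift: "(\<lambda>z. m + \<sigma> *\<^sub>R z) = (\<lambda>z. m' + \<sigma> *\<^sub>R (z + u))"
    using \<sigma> by (simp add: u_def algebra_simps)
  have "norm u \<le> \<alpha> / \<sigma>" using dist \<sigma> by (simp add: u_def divide_right_mono)
  also have "\<alpha> / \<sigma> = \<epsilon> / (2 * sqrt (2 * ln (1.25 / \<delta>)))" using \<alpha> by (simp add: \<sigma>_def)
  finally have tail: "emeasure std_gauss {z. 3 * \<epsilon> / 4 - (norm u)\<^sup>2 / 2 < z \<bullet> u} \<le> ennreal \<delta>"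
    by (rule emeasure_std_gauss_calibrated_tail_le[OF \<epsilon> \<delta>])
  interpret P: prob_space "distr std_gauss borel (\<lambda>z. m + \<sigma> *\<^sub>R z)"
    by (intro prob_space_distr_std_gauss borel_measurable_continuous_onI continuous_intros)
  interpret P': prob_space "distr std_gauss borel (\<lambda>z. m' + \<sigma> *\<^sub>R z)"
    by (intro prob_space_distr_std_gauss borel_measurable_continuous_onI continuous_intros)
  have "ennreal (measure (distr std_gauss borel (\<lambda>z. m + \<sigma> *\<^sub>R z)) B)
      \<le> ennreal (exp (3 * \<epsilon> / 4)) * ennreal (measure (distr std_gauss borel (\<lambda>z. m' + \<sigma> *\<^sub>R z)) B)
        + ennreal \<delta>"
    using emeasure_shifted_gaussian_le[OF B, of m' \<sigma> u "3 * \<epsilon> / 4"] tail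
    unfolding shift[symmetric] P.emeasure_eq_measure P'.emeasure_eq_measure
    by (meson add_left_mono order_trans)
  also have "\<dots> = ennreal (exp (3 * \<epsilon> / 4) * measure (distr std_gauss borel (\<lambda>z. m' + \<sigma> *\<^sub>R z)) B + \<delta>)"
    using \<delta> by (simp add: ennreal_mult)
  finally show ?thesis using \<delta> by (subst (asm) ennreal_le_iff) auto
qed

section \<open>The ePTR mechanism\<close>

lemma measure_ePTR:
  fixes \<theta> :: "'d \<Rightarrow> real^'q"
  assumes \<pi>: "prob_space \<pi>" "sets \<pi> = sets borel" and B: "B \<in> sets borel"
  shows "sets (ePTR \<theta> \<alpha> \<gamma> \<epsilon> \<delta> \<pi> D) = sets borel"
    and "measure (ePTR \<theta> \<alpha> \<gamma> \<epsilon> \<delta> \<pi> D) B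
       = ePTR_prob \<epsilon> \<delta> (\<gamma> D) * measure (distr std_gauss borel
           (\<lambda>z. \<theta> D + ((2 * \<alpha> / \<epsilon>) * sqrt (2 * ln (1.25 / \<delta>))) *\<^sub>R z)) B
         + (1 - ePTR_prob \<epsilon> \<delta> (\<gamma> D)) * measure \<pi> B"
proof -
  define p where "p = ePTR_prob \<epsilon> \<delta> (\<gamma> D)"
  define G where "G = distr std_gauss borel (\<lambda>z. \<theta> D + ((2 * \<alpha> / \<epsilon>) * sqrt (2 * ln (1.25 / \<delta>))) *\<^sub>R z)"
  define K where "K I = (if I then G else \<pi>)" for I
  have p: "0 \<le> p" "p \<le> 1"
    by (simp_all add: p_def ePTR_prob_def add_pos_pos)
  have E: "ePTR \<theta> \<alpha> \<gamma> \<epsilon> \<delta> \<pi> D = measure_pmf (bernoulli_pmf p) \<bind> K"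
    unfolding ePTR_def p_def K_def G_def by simp
  interpret G: prob_space G
    unfolding G_def by (intro prob_space_distr_std_gauss borel_measurable_continuous_onI continuous_intros)
  interpret \<pi>: prob_space \<pi> by (rule \<pi>(1))
  have sK: "sets (K I) = sets borel" for I by (simp add: K_def G_def \<pi>(2))
  have K: "K \<in> measurable (measure_pmf (bernoulli_pmf p)) (subprob_algebra borel)"
    using sK by (auto simp: space_subprob_algebra K_def G.subprob_space_axioms \<pi>.subprob_space_axioms)
  show "sets (ePTR \<theta> \<alpha> \<gamma> \<epsilon> \<delta> \<pi> D) = sets borel"
    unfolding E by (rule sets_bind) (auto simp: sK)
  have "emeasure (ePTR \<theta> \<alpha> \<gamma> \<epsilon> \<delta> \<pi> D) B = (\<integral>\<^sup>+I. emeasure (K I) B \<partial>measure_pmf (bernoulli_pmf p))"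
    unfolding E by (rule emeasure_bind[OF _ K B]) simp
  also have "\<dots> = ennreal (measure G B) * ennreal p + ennreal (measure \<pi> B) * ennreal (1 - p)"
    using p by (simp add: K_def G.emeasure_eq_measure \<pi>.emeasure_eq_measure)
  also have "\<dots> = ennreal (p * measure G B + (1 - p) * measure \<pi> B)"
    using p by (simp add: ennreal_mult mult.commute)
  finally have "emeasure (ePTR \<theta> \<alpha> \<gamma> \<epsilon> \<delta> \<pi> D) B = ennreal (p * measure G B + (1 - p) * measure \<pi> B)" .
  then show "measure (ePTR \<theta> \<alpha> \<gamma> \<epsilon> \<delta> \<pi> D) B = p * measure G B + (1 - p) * measure \<pi> B"
    unfolding measure_def using p by (simp del: ennreal_plus)
qed

definition logistic :: "real \<Rightarrow> real" where
  "logistic x = exp x / (exp x + 1)"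

lemma ePTR_prob_eq_logistic: "ePTR_prob \<epsilon> \<delta> g = logistic (\<epsilon> / 2 * (g - ePTR_M \<epsilon> \<delta>))"
  by (simp add: ePTR_prob_def logistic_def)

lemma logistic_bounds: "0 \<le> logistic x" "logistic x \<le> 1"
  by (simp_all add: logistic_def add_pos_pos)

lemma logistic_le_exp: "logistic x \<le> exp x"
  by (simp add: logistic_def divide_simps add_pos_pos)

lemma one_minus_logistic: "1 - logistic x = 1 / (exp x + 1)"
proof -
  have "exp x + 1 > 0" by (simp add: add_pos_pos)
  then show ?thesis by (simp add: logistic_def field_simps)
qed

lemma logistic_le_exp_mult:
  assumes "\<bar>a - b\<bar> \<le> d"
  shows "logistic a \<le> exp d * logistic b"
proof -
  have "exp a \<le> exp (b + d)" "exp a * exp b \<le> exp a * exp (b + d)"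
    using assms by auto
  moreover have "exp a * (exp b + 1) = exp a * exp b + exp a"
    and "exp (b + d) * (exp a + 1) = exp a * exp (b + d) + exp (b + d)"
    by (simp_all add: algebra_simps)
  ultimately have "exp a * (exp b + 1) \<le> exp (b + d) * (exp a + 1)" by linarith
  then show ?thesis
    by (simp add: logistic_def exp_add divide_simps add_pos_pos mult.commute mult.left_commute)
qed

lemma one_minus_logistic_le_exp_mult:
  assumes "\<bar>a - b\<bar> \<le> d"
  shows "1 - logistic a \<le> exp d * (1 - logistic b)"
proof -
  have "exp b \<le> exp d * exp a" "1 \<le> exp d"
    using assms by (simp_all add: exp_add[symmetric])
  then have "exp b + 1 \<le> exp d * (exp a + 1)" unfolding distrib_left mult_1_right by (rule add_mono)
  moreover have "exp a + 1 > 0" "exp b + 1 > 0" by (simp_all add: add_pos_pos)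
  ultimately show ?thesis by (simp add: one_minus_logistic field_simps)
qed

text \<open>This is what the offset \<open>M\<close> is chosen for.\<close>

lemma ePTR_prob_le_delta:
  assumes "0 < \<epsilon>" "0 < \<delta>" "g \<le> 0"
  shows "ePTR_prob \<epsilon> \<delta> g \<le> \<delta>"
proof -
  define m where "m = max (1 / \<delta>) (1 / \<epsilon>)"
  have m: "m > 0" "1 / \<delta> \<le> m" using assms by (auto simp: m_def less_max_iff_disj)
  have "\<epsilon> / 2 * (g - ePTR_M \<epsilon> \<delta>) = \<epsilon> / 2 * g - \<epsilon> / 2 - ln m"
    using assms by (simp add: ePTR_M_def m_def field_simps)
  moreover have "\<epsilon> / 2 * g \<le> 0" using assms by (simp add: mult_nonneg_nonpos)
  ultimately have "\<epsilon> / 2 * (g - ePTR_M \<epsilon> \<delta>) \<le> - ln m" using assms by linarith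
  then have "ePTR_prob \<epsilon> \<delta> g \<le> exp (- ln m)"
    unfolding ePTR_prob_eq_logistic by (intro order_trans[OF logistic_le_exp]) simp
  also have "\<dots> = 1 / m" using m by (simp add: exp_minus inverse_eq_divide)
  also have "\<dots> \<le> \<delta>" using m assms by (simp add: field_simps)
  finally show ?thesis .
qed

lemma ePTR_prob_neighbor_ratio:
  assumes "0 < \<epsilon>" "\<bar>g - g'\<bar> \<le> 1 / 2"
  shows "ePTR_prob \<epsilon> \<delta> g \<le> exp (\<epsilon> / 4) * ePTR_prob \<epsilon> \<delta> g'"
    and "1 - ePTR_prob \<epsilon> \<delta> g \<le> exp (\<epsilon> / 4) * (1 - ePTR_prob \<epsilon> \<delta> g')"
proof -
  have "\<epsilon> / 2 * (g - ePTR_M \<epsilon> \<delta>) - \<epsilon> / 2 * (g' - ePTR_M \<epsilon> \<delta>) = \<epsilon> / 2 * (g - g')"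
    unfolding right_diff_distrib[symmetric] by simp
  then have "\<bar>\<epsilon> / 2 * (g - ePTR_M \<epsilon> \<delta>) - \<epsilon> / 2 * (g' - ePTR_M \<epsilon> \<delta>)\<bar> = \<epsilon> / 2 * \<bar>g - g'\<bar>"
    using assms(1) by (simp only: abs_mult)
  also have "\<dots> \<le> \<epsilon> / 4" using assms by simp
  finally show "ePTR_prob \<epsilon> \<delta> g \<le> exp (\<epsilon> / 4) * ePTR_prob \<epsilon> \<delta> g'"
    and "1 - ePTR_prob \<epsilon> \<delta> g \<le> exp (\<epsilon> / 4) * (1 - ePTR_prob \<epsilon> \<delta> g')"
    unfolding ePTR_prob_eq_logistic
    by (simp_all add: logistic_le_exp_mult one_minus_logistic_le_exp_mult)
qed

lemma mixture_le_exp_mult_add: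
  fixes p p' g g' w \<epsilon> :: real
  assumes "0 \<le> p" "0 \<le> p'" "p' \<le> 1" "0 \<le> g'" "0 \<le> w" "0 \<le> \<epsilon>" "0 \<le> \<delta>" "p \<le> 1"
    and "p \<le> exp (\<epsilon> / 4) * p'" "1 - p \<le> exp (\<epsilon> / 4) * (1 - p')"
    and "g \<le> exp (3 * \<epsilon> / 4) * g' + \<delta>" "0 \<le> g"
  shows "p * g + (1 - p) * w \<le> exp \<epsilon> * (p' * g' + (1 - p') * w) + \<delta>"
proof -
  have "p * g \<le> p * (exp (3 * \<epsilon> / 4) * g') + \<delta>"
    using assms mult_left_mono[of g "exp (3 * \<epsilon> / 4) * g' + \<delta>" p] mult_left_le_one_le[of \<delta> p]
    by (simp add: algebra_simps)
  also have "p * (exp (3 * \<epsilon> / 4) * g') \<le> exp \<epsilon> * (p' * g')"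
    using assms mult_right_mono[of p "exp (\<epsilon> / 4) * p'" "exp (3 * \<epsilon> / 4) * g'"]
    by (simp add: mult_ac exp_add[symmetric])
  moreover have "(1 - p) * w \<le> exp \<epsilon> * ((1 - p') * w)"
    using assms mult_right_mono[of "1 - p" "exp (\<epsilon> / 4) * (1 - p')" w]
      mult_right_mono[of "exp (\<epsilon> / 4)" "exp \<epsilon>" "(1 - p') * w"]
    by (simp add: mult_ac)
  ultimately show ?thesis by (simp add: algebra_simps)
qed

lemma mixture_le_exp_mult_add_small_weight:
  fixes p p' g g' w \<epsilon> :: real
  assumes "0 \<le> p" "0 \<le> p'" "p' \<le> 1" "0 \<le> g'" "g \<le> 1" "0 \<le> w" "0 \<le> \<epsilon>"
    and "p \<le> \<delta>" "1 - p \<le> exp (\<epsilon> / 4) * (1 - p')"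
  shows "p * g + (1 - p) * w \<le> exp \<epsilon> * (p' * g' + (1 - p') * w) + \<delta>"
proof -
  have "p * g \<le> \<delta>" using assms mult_left_le[of g p] by linarith
  moreover have "(1 - p) * w \<le> exp \<epsilon> * ((1 - p') * w)"
    using assms mult_right_mono[of "1 - p" "exp (\<epsilon> / 4) * (1 - p')" w]
      mult_right_mono[of "exp (\<epsilon> / 4)" "exp \<epsilon>" "(1 - p') * w"]
    by (simp add: mult_ac)
  moreover have "0 \<le> exp \<epsilon> * (p' * g')"
    using assms by simp
  ultimately show ?thesis by (simp add: algebra_simps)
qed

lemma is_DP_ePTR:
  fixes \<theta> :: "'a list \<Rightarrow> real^'q" and \<gamma> :: "'a list \<Rightarrow> real"
  assumes \<epsilon>: "0 < \<epsilon>" "\<epsilon> < 2" and \<delta>: "0 < \<delta>" "\<delta> < 1" and \<alpha>: "\<alpha> > 0"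
    and \<pi>: "prob_space \<pi>" "sets \<pi> = sets borel"
    and \<gamma>_sensitivity: "\<And>D D'. length D = n \<Longrightarrow> neighbors D D' \<Longrightarrow> \<bar>\<gamma> D - \<gamma> D'\<bar> \<le> 1 / 2"
    and \<theta>_sensitivity: "\<And>D D'. length D = n \<Longrightarrow> neighbors D D' \<Longrightarrow> \<gamma> D > 0 \<Longrightarrow> norm (\<theta> D - \<theta> D') \<le> \<alpha>"
  shows "is_DP \<epsilon> \<delta> n (ePTR \<theta> \<alpha> \<gamma> \<epsilon> \<delta> \<pi>)"
  unfolding is_DP_def
proof (intro allI impI ballI)
  fix D D' B
  assume D: "length D = n" and nb: "neighbors D D'" and "B \<in> sets (ePTR \<theta> \<alpha> \<gamma> \<epsilon> \<delta> \<pi> D)"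
  moreover have "sets (ePTR \<theta> \<alpha> \<gamma> \<epsilon> \<delta> \<pi> D) = sets borel"
    by (rule measure_ePTR(1)[OF \<pi> sets.top])
  ultimately have B: "B \<in> sets borel" by simp
  define \<sigma> where "\<sigma> = (2 * \<alpha> / \<epsilon>) * sqrt (2 * ln (1.25 / \<delta>))"
  define p p' where "p = ePTR_prob \<epsilon> \<delta> (\<gamma> D)" and "p' = ePTR_prob \<epsilon> \<delta> (\<gamma> D')"
  define g g' where "g = measure (distr std_gauss borel (\<lambda>z. \<theta> D + \<sigma> *\<^sub>R z)) B"
    and "g' = measure (distr std_gauss borel (\<lambda>z. \<theta> D' + \<sigma> *\<^sub>R z)) B"
  interpret G: prob_space "distr std_gauss borel (\<lambda>z. \<theta> D + \<sigma> *\<^sub>R z)"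
    by (intro prob_space_distr_std_gauss borel_measurable_continuous_onI continuous_intros)
  have bounds: "0 \<le> p" "p \<le> 1" "0 \<le> p'" "p' \<le> 1" "0 \<le> g" "g \<le> 1" "0 \<le> g'" "0 \<le> measure \<pi> B"
    by (simp_all add: p_def p'_def g_def g'_def ePTR_prob_eq_logistic logistic_bounds)
  have coin: "p \<le> exp (\<epsilon> / 4) * p'" "1 - p \<le> exp (\<epsilon> / 4) * (1 - p')"
    unfolding p_def p'_def using ePTR_prob_neighbor_ratio \<epsilon>(1) \<gamma>_sensitivity[OF D nb] by blast+
  have "p * g + (1 - p) * measure \<pi> B \<le> exp \<epsilon> * (p' * g' + (1 - p') * measure \<pi> B) + \<delta>"
  proof (cases "\<gamma> D > 0")
    case True
    then have "g \<le> exp (3 * \<epsilon> / 4) * g' + \<delta>"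
      unfolding g_def g'_def \<sigma>_def
      by (rule measure_gaussian_mechanism_le[OF \<epsilon> \<delta> \<alpha> \<theta>_sensitivity[OF D nb] B])
    with bounds coin \<epsilon> \<delta> show ?thesis by (intro mixture_le_exp_mult_add) simp_all
  next
    case False
    then have "p \<le> \<delta>" unfolding p_def using \<epsilon> \<delta> by (intro ePTR_prob_le_delta) simp_all
    with bounds coin \<epsilon> show ?thesis by (intro mixture_le_exp_mult_add_small_weight) simp_all
  qed
  then show "measure (ePTR \<theta> \<alpha> \<gamma> \<epsilon> \<delta> \<pi> D) B \<le> exp \<epsilon> * measure (ePTR \<theta> \<alpha> \<gamma> \<epsilon> \<delta> \<pi> D') B + \<delta>"
    by (simp add: measure_ePTR(2)[OF \<pi> B] p_def p'_def g_def g'_def \<sigma>_def)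
qed

section \<open>ePTR linear regression\<close>

lemma neighbors_sym:
  assumes "neighbors D D'"
  shows "neighbors D' D"
proof -
  have len: "length D' = length D" using assms by (simp add: neighbors_def)
  then have "{i. i < length D' \<and> D' ! i \<noteq> D ! i} = {i. i < length D \<and> D ! i \<noteq> D' ! i}"
    by auto
  then have "hamming D' D = hamming D D'" by (simp only: hamming_def)
  with assms len show ?thesis by (simp add: neighbors_def)
qed

lemma neighbors_obtain_list_update:
  assumes "neighbors D D'"
  obtains k where "k < length D" "D' = D[k := D' ! k]"
proof -
  have card: "card {i. i < length D \<and> D ! i \<noteq> D' ! i} = 1" and len: "length D' = length D"
    using assms unfolding neighbors_def hamming_def by auto
  obtain k where k: "{i. i < length D \<and> D ! i \<noteq> D' ! i} = {k}"
    using card by (rule card_1_singletonE)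
  then have "k < length D" by blast
  have "D ! i = D' ! i" if "i < length D" "i \<noteq> k" for i
    using k that by blast
  with len \<open>k < length D\<close> have "D' = D[k := D' ! k]"
    by (intro nth_equalityI) (auto simp: nth_list_update)
  with \<open>k < length D\<close> show ?thesis by (rule that)
qed

lemma length_clip_data [simp]: "length (clip_data Rx R\<theta> D) = length D"
  by (simp add: clip_data_def)

lemma clip_data_nth_bounded:
  assumes "Rx > 0" "R\<theta> > 0" "i < length D"
  shows "norm (fst (clip_data Rx R\<theta> D ! i)) \<le> Rx" "\<bar>snd (clip_data Rx R\<theta> D ! i)\<bar> \<le> Rx * R\<theta>"
  using assms norm_clipR_le[of Rx "fst (D ! i)"] norm_clipR_le[of "Rx * R\<theta>" "snd (D ! i)"]
  by (simp_all add: clip_data_def split_beta)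

lemma neighbors_obtain_clip_data_list_update:
  assumes "neighbors D D'"
  obtains k a where "k < length D" "a = clip_data Rx R\<theta> D' ! k"
    "clip_data Rx R\<theta> D' = (clip_data Rx R\<theta> D)[k := a]"
proof -
  obtain k where k: "k < length D" and "D' = D[k := D' ! k]"
    using assms by (rule neighbors_obtain_list_update)
  moreover obtain d where "d = D' ! k" by simp
  ultimately have "D' = D[k := d]" by simp
  with k show ?thesis by (intro that[of k]) (simp_all add: clip_data_def map_update)
qed

lemma lambda_min_gram_clip_data_neighbors:
  assumes "Rx > 0" "R\<theta> > 0" "neighbors D D'"
  shows "lambda_min (gram (clip_data Rx R\<theta> D)) - Rx\<^sup>2 \<le> lambda_min (gram (clip_data Rx R\<theta> D'))"
proof -
  obtain k a where k: "k < length D"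
    and eq: "clip_data Rx R\<theta> D' = (clip_data Rx R\<theta> D)[k := a]"
    using assms(3) by (rule neighbors_obtain_clip_data_list_update)
  have "norm (fst (clip_data Rx R\<theta> D ! k)) \<le> Rx"
    using assms(1,2) k by (rule clip_data_nth_bounded)
  with k show ?thesis unfolding eq by (intro lambda_min_gram_list_update) simp_all
qed

lemma gamma_lr_neighbors:
  assumes Rx: "Rx > 0" and R\<theta>: "R\<theta> > 0" and nb: "neighbors D D'"
  shows "\<bar>gamma_lr Rx R\<theta> c0 D - gamma_lr Rx R\<theta> c0 D'\<bar> \<le> 1 / 2"
proof -
  define l where "l = lambda_min (gram (clip_data Rx R\<theta> D))"
  define l' where "l' = lambda_min (gram (clip_data Rx R\<theta> D'))"
  define K where "K = c0 * real (length D) + 2 * Rx\<^sup>2"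
  have "l - Rx\<^sup>2 \<le> l'"
    unfolding l_def l'_def using Rx R\<theta> nb by (rule lambda_min_gram_clip_data_neighbors)
  moreover have "l' - Rx\<^sup>2 \<le> l"
    unfolding l_def l'_def using Rx R\<theta> neighbors_sym[OF nb] by (rule lambda_min_gram_clip_data_neighbors)
  ultimately have max_diff: "\<bar>max (l - K) 0 - max (l' - K) 0\<bar> \<le> Rx\<^sup>2"
    by (simp add: max_def abs_le_iff)
  have "length D' = length D" using nb by (simp add: neighbors_def)
  then have "gamma_lr Rx R\<theta> c0 D - gamma_lr Rx R\<theta> c0 D'
      = (max (l - K) 0 - max (l' - K) 0) / (2 * Rx\<^sup>2)"
    unfolding gamma_lr_def Let_def l_def[symmetric] l'_def[symmetric] K_def diff_diff_eq
    by (simp add: diff_divide_distrib)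
  then have "\<bar>gamma_lr Rx R\<theta> c0 D - gamma_lr Rx R\<theta> c0 D'\<bar>
      = \<bar>max (l - K) 0 - max (l' - K) 0\<bar> / (2 * Rx\<^sup>2)"
    by simp
  also have "\<dots> \<le> Rx\<^sup>2 / (2 * Rx\<^sup>2)" using max_diff by (rule divide_right_mono) simp
  also have "\<dots> = 1 / 2" using Rx by simp
  finally show ?thesis .
qed

lemma theta_hat_neighbors:
  assumes Rx: "Rx > 0" and R\<theta>: "R\<theta> > 0" and c0: "c0 > 0" and nb: "neighbors D D'"
    and pos: "gamma_lr Rx R\<theta> c0 D > 0"
  shows "norm (theta_hat Rx R\<theta> D - theta_hat Rx R\<theta> D') \<le> 8 * Rx\<^sup>2 * R\<theta> / (real (length D) * c0)"
proof -
  obtain k a where k: "k < length D" and a: "a = clip_data Rx R\<theta> D' ! k"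
    and C': "clip_data Rx R\<theta> D' = (clip_data Rx R\<theta> D)[k := a]"
    using nb by (rule neighbors_obtain_clip_data_list_update)
  define C where "C = clip_data Rx R\<theta> D"
  define L where "L = real (length D) * c0"
  have "length D > 0" using k by linarith
  with c0 have L: "L > 0" by (simp add: L_def)
  have "L + 2 * Rx\<^sup>2 < lambda_min (gram C)"
    using pos Rx unfolding gamma_lr_def Let_def
    by (simp add: C_def L_def zero_less_mult_iff less_max_iff_disj algebra_simps)
  moreover have "lambda_min (gram C) - Rx\<^sup>2 \<le> lambda_min (gram (C[k := a]))"
    using lambda_min_gram_clip_data_neighbors[OF Rx R\<theta> nb] by (simp add: C_def C')
  ultimately have lmin: "L \<le> lambda_min (gram C)" "lambda_min (gram (C[k := a])) > 0"
    using L zero_le_power2[of Rx] by linarith+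
  have "k < length D'" using k nb by (simp add: neighbors_def)
  then have bounds: "norm (fst (C ! k)) \<le> Rx" "\<bar>snd (C ! k)\<bar> \<le> Rx * R\<theta>"
    "norm (fst a) \<le> Rx" "\<bar>snd a\<bar> \<le> Rx * R\<theta>"
    unfolding C_def a using clip_data_nth_bounded[OF Rx R\<theta>] k by blast+
  have "invertible (gram C)" "invertible (gram (C[k := a]))"
    using lmin L by (auto intro: invertible_if_lambda_min_pos transpose_gram)
  then have "theta_hat Rx R\<theta> D = clipR R\<theta> (matrix_inv (gram C) *v xy C)"
    "theta_hat Rx R\<theta> D' = clipR R\<theta> (matrix_inv (gram (C[k := a])) *v xy (C[k := a]))"
    by (simp_all add: theta_hat_def Let_def C_def C')
  with clipped_least_squares_sensitivity[OF Rx R\<theta> _ bounds L lmin] k show ?thesis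
    by (simp add: C_def L_def)
qed

theorem theorem5:
  fixes n :: nat and Rx R\<theta> c0 \<epsilon> \<delta> :: real and \<pi>perp :: "(real^'p) measure"
  assumes "n \<ge> 1" and "Rx > 0" and "R\<theta> > 0" and "c0 > 0"
    and "0 < \<epsilon>" and "\<epsilon> < 2" and "0 < \<delta>" and "\<delta> < 1"
    and "prob_space \<pi>perp" and "sets \<pi>perp = sets borel"
  shows "is_DP \<epsilon> \<delta> n (ePTR_linreg n Rx R\<theta> c0 \<epsilon> \<delta> \<pi>perp)"
  unfolding ePTR_linreg_def
proof (rule is_DP_ePTR)
  show "8 * Rx\<^sup>2 * R\<theta> / (real n * c0) > 0" using assms by simp
  show "\<bar>gamma_lr Rx R\<theta> c0 D - gamma_lr Rx R\<theta> c0 D'\<bar> \<le> 1 / 2" if "neighbors D D'" for D D'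
    using assms(2,3) that by (rule gamma_lr_neighbors)
  show "norm (theta_hat Rx R\<theta> D - theta_hat Rx R\<theta> D') \<le> 8 * Rx\<^sup>2 * R\<theta> / (real n * c0)"
    if "length D = n" "neighbors D D'" "gamma_lr Rx R\<theta> c0 D > 0" for D D'
    using theta_hat_neighbors[OF assms(2-4) that(2,3)] that(1) by simp
qed (use assms in simp_all)

end
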